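(* Let $n\ge3$, $\ell>0$, $\alpha\ge(n-2)\ell$, $S=\alpha I_n+\ell\mathbf{1}_n\mathbf{1}_n^\top$, and let $P\ne0$ be a real symmetric diagonally dominant $n\times n$ matrix with nonnegative entries. Define $f(t)=\|(S+tP)^{-1}\|_\infty$ for $t\ge0$. Then $f$ is differentiable at $t=0$ (as a one-sided derivative) and $f'(0)<0$.
   Context: For a real matrix $P$, $\Delta_i(P)=|P_{ii}|-\sum_{j\ne i}|P_{ij}|$; $P$ is diagonally dominant if $\Delta_i(P)\ge0$ for all $i$. $\|A\|_\infty$ is the maximum absolute row sum. *)

theory Defs
  imports "HOL-Analysis.Analysis"
begin

definition Delta :: "real^'n^'n \<Rightarrow> 'n \<Rightarrow> real" where
  "Delta P i = \<bar>P $ i $ i\<bar> - (\<Sum>j\<in>UNIV - {i}. \<bar>P $ i $ j\<bar>)"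

definition diag_dominant :: "real^'n^'n \<Rightarrow> bool" where
  "diag_dominant P \<longleftrightarrow> (\<forall>i. Delta P i \<ge> 0)"

definition norm_inf :: "real^'n^'n \<Rightarrow> real" where
  "norm_inf A = Max (range (\<lambda>i. \<Sum>j\<in>UNIV. \<bar>A $ i $ j\<bar>))"

end

theory Submission
  imports Defs
begin

text \<open>
  Write \<open>S = \<alpha> I + l J\<close> (with \<open>J\<close> the all-ones matrix) and \<open>N = card 'n\<close>.  Its inverse is again of
  the form \<open>A = a I + c J\<close>, with \<open>a = 1/\<alpha>\<close> and \<open>c = -l/(\<alpha>(\<alpha> + N l))\<close>, so \<open>A\<close> has positive
  diagonal, negative off-diagonal entries and the same absolute row sum \<open>\<rho>\<close> in every row.

  The proof is a first-order perturbation argument.  With \<open>B = A P A\<close> the resolvent identity gives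
  \<open>(S + tP)\<^sup>-\<^sup>1 = A - t B + O(t\<^sup>2)\<close>, where the error is controlled by the entrywise \<open>\<ell>\<^sub>1\<close> norm.  For
  small \<open>t\<close> no entry changes sign, so the \<open>i\<close>-th absolute row sum of \<open>(S + tP)\<^sup>-\<^sup>1\<close> is
  \<open>\<rho> - t r\<^sub>i + O(t\<^sup>2)\<close> with \<open>r\<^sub>i = \<Sum>\<^sub>j sgn(A\<^sub>i\<^sub>j) B\<^sub>i\<^sub>j\<close>.  Since all rows share the constant term \<open>\<rho>\<close>,
  the maximum of the row sums has right derivative \<open>max\<^sub>i (-r\<^sub>i)\<close> at \<open>0\<close>.  Finally an explicit
  computation expresses \<open>r\<^sub>i\<close> through \<open>P\<^sub>i\<^sub>i\<close>, the off-diagonal row sum of \<open>P\<close> and the total sum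
  of \<open>P\<close>, and symmetry, nonnegativity and diagonal dominance of \<open>P \<noteq> 0\<close> make every \<open>r\<^sub>i\<close> positive.
\<close>

section \<open>The entrywise \<open>\<ell>\<^sub>1\<close> norm\<close>

text \<open>The sum of the absolute values of all entries: a submultiplicative norm that is convenient
  for entrywise error bounds.\<close>

definition l1_norm :: "real^'n^'m \<Rightarrow> real" where
  "l1_norm X = (\<Sum>i\<in>UNIV. \<Sum>j\<in>UNIV. \<bar>X $ i $ j\<bar>)"

lemma l1_norm_nonneg: "0 \<le> l1_norm X"
  unfolding l1_norm_def by (intro sum_nonneg) auto

lemma row_le_l1_norm: "(\<Sum>j\<in>UNIV. \<bar>X $ i $ j\<bar>) \<le> l1_norm X"
  unfolding l1_norm_def
  by (rule member_le_sum[where f = "\<lambda>i. \<Sum>j\<in>UNIV. \<bar>X $ i $ j\<bar>"]) (auto intro: sum_nonneg)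

lemma entry_le_l1_norm: "\<bar>X $ i $ j\<bar> \<le> l1_norm X"
  using member_le_sum[of j UNIV "\<lambda>j. \<bar>X $ i $ j\<bar>"] row_le_l1_norm[of X i] by simp

lemma l1_norm_diff: "l1_norm (X - Y) \<le> l1_norm X + l1_norm Y"
  unfolding l1_norm_def by (simp add: sum.distrib[symmetric] abs_triangle_ineq4 sum_mono)

lemma l1_norm_scaleR: "l1_norm (c *\<^sub>R X) = \<bar>c\<bar> * l1_norm X"
  unfolding l1_norm_def by (simp add: abs_mult sum_distrib_left)

lemma l1_norm_mult: "l1_norm (X ** Y) \<le> l1_norm X * l1_norm Y"
proof -
  have "l1_norm (X ** Y) = (\<Sum>i\<in>UNIV. \<Sum>j\<in>UNIV. \<bar>\<Sum>k\<in>UNIV. X $ i $ k * Y $ k $ j\<bar>)"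
    by (simp add: l1_norm_def matrix_matrix_mult_def)
  also have "\<dots> \<le> (\<Sum>i\<in>UNIV. \<Sum>j\<in>UNIV. \<Sum>k\<in>UNIV. \<bar>X $ i $ k\<bar> * \<bar>Y $ k $ j\<bar>)"
    by (intro sum_mono order.trans[OF sum_abs]) (simp add: abs_mult)
  also have "\<dots> = (\<Sum>i\<in>UNIV. \<Sum>k\<in>UNIV. \<bar>X $ i $ k\<bar> * (\<Sum>j\<in>UNIV. \<bar>Y $ k $ j\<bar>))"
    by (rule sum.cong[OF refl], subst sum.swap, simp add: sum_distrib_left)
  also have "\<dots> \<le> (\<Sum>i\<in>UNIV. \<Sum>k\<in>UNIV. \<bar>X $ i $ k\<bar> * l1_norm Y)"
    by (intro sum_mono mult_left_mono row_le_l1_norm) auto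
  also have "\<dots> = l1_norm X * l1_norm Y"
    by (simp add: l1_norm_def sum_distrib_right)
  finally show ?thesis .
qed

section \<open>Inverses of perturbed matrices\<close>

lemma matrix_add_rdistrib: "((A::real^'n^'m) + B) ** C = A ** C + B ** C"
  by (vector matrix_matrix_mult_def sum.distrib[symmetric] field_simps)

lemma matrix_diff_ldistrib: "(A::real^'n^'m) ** (B - C) = A ** B - A ** C"
  by (vector matrix_matrix_mult_def sum_subtractf[symmetric] field_simps)

lemma matrix_inv_right:
  fixes M :: "real^'n^'n"
  assumes "invertible M"
  shows "M ** matrix_inv M = mat 1"
  using someI_ex[OF assms[unfolded invertible_def]] unfolding matrix_inv_def by auto

text \<open>A perturbation of the identity that is small in \<open>\<ell>\<^sub>1\<close> norm has trivial kernel: evaluate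
  the equation \<open>x = -C x\<close> at a coordinate where \<open>|x\<^sub>i|\<close> is maximal.\<close>

lemma identity_plus_small_kernel:
  fixes C :: "real^'n^'n" and x :: "real^'n"
  assumes small: "l1_norm C < 1" and ker: "(mat 1 + C) *v x = 0"
  shows "x = 0"
proof -
  define m where "m = Max (range (\<lambda>k. \<bar>x $ k\<bar>))"
  have le_m: "\<bar>x $ k\<bar> \<le> m" for k
    unfolding m_def by (rule Max_ge) auto
  have "m \<in> range (\<lambda>k. \<bar>x $ k\<bar>)"
    unfolding m_def by (rule Max_in) auto
  then obtain i where i: "m = \<bar>x $ i\<bar>"
    by auto
  have "x $ i = - (C *v x) $ i"
    using ker by (simp add: vec_eq_iff matrix_vector_mult_add_rdistrib add_eq_0_iff)
  then have "m = \<bar>\<Sum>k\<in>UNIV. C $ i $ k * x $ k\<bar>"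
    by (simp add: i matrix_vector_mult_def)
  also have "\<dots> \<le> (\<Sum>k\<in>UNIV. \<bar>C $ i $ k\<bar> * m)"
    by (intro order.trans[OF sum_abs] sum_mono) (auto simp: abs_mult intro!: mult_left_mono le_m)
  also have "\<dots> \<le> l1_norm C * m"
    using le_m[of i] by (simp add: sum_distrib_right[symmetric] mult_right_mono row_le_l1_norm)
  finally have "(1 - l1_norm C) * m \<le> 0"
    by (simp add: algebra_simps)
  then have "m \<le> 0"
    using small by (simp add: mult_le_0_iff)
  then show ?thesis
    using le_m by (metis abs_le_zero_iff order_trans vec_eq_iff zero_index)
qed

lemma perturbed_inverse_resolvent:
  fixes S P A :: "real^'n^'n"
  assumes left_inv: "A ** S = mat 1" and small: "l1_norm (t *\<^sub>R (A ** P)) < 1"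
  shows "invertible (S + t *\<^sub>R P)"
    and "matrix_inv (S + t *\<^sub>R P) = A - t *\<^sub>R (A ** P ** matrix_inv (S + t *\<^sub>R P))"
proof -
  define M where "M = S + t *\<^sub>R P"
  have AM: "A ** M = mat 1 + t *\<^sub>R (A ** P)"
    unfolding M_def by (simp add: matrix_add_ldistrib matrix_scalar_ac scalar_matrix_assoc left_inv)
  have "M *v x = 0 \<Longrightarrow> x = 0" for x
    using identity_plus_small_kernel[OF small, of x]
    by (metis AM matrix_vector_mul_assoc matrix_vector_mult_0_right)
  then show inv: "invertible (S + t *\<^sub>R P)"
    unfolding M_def[symmetric] invertible_left_inverse matrix_left_invertible_ker by blast
  have "A = (A ** M) ** matrix_inv M"
    by (metis M_def inv matrix_inv_right matrix_mul_assoc matrix_mul_rid)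
  also have "\<dots> = matrix_inv M + t *\<^sub>R (A ** P ** matrix_inv M)"
    by (simp add: AM matrix_add_rdistrib scalar_matrix_assoc)
  finally show "matrix_inv (S + t *\<^sub>R P) = A - t *\<^sub>R (A ** P ** matrix_inv (S + t *\<^sub>R P))"
    unfolding M_def by (simp add: eq_diff_eq)
qed

text \<open>Iterating the resolvent identity once gives the second-order expansion
  \<open>(S + tP)\<^sup>-\<^sup>1 = A - t A P A + O(t\<^sup>2)\<close> with an explicit constant.\<close>

lemma perturbed_inverse_expansion:
  fixes S P A :: "real^'n^'n"
  assumes left_inv: "A ** S = mat 1" and t: "0 \<le> t" "t * l1_norm (A ** P) \<le> 1/2"
  shows "l1_norm (matrix_inv (S + t *\<^sub>R P) - (A - t *\<^sub>R (A ** P ** A)))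
           \<le> 2 * l1_norm (A ** P)^2 * l1_norm A * t^2"
proof -
  define C where "C = A ** P"
  define G where "G = matrix_inv (S + t *\<^sub>R P)"
  have "l1_norm (t *\<^sub>R (A ** P)) < 1"
    using t by (simp add: l1_norm_scaleR)
  then have G_eq: "G = A - t *\<^sub>R (C ** G)"
    using perturbed_inverse_resolvent(2)[OF left_inv] unfolding G_def C_def by blast
  have G_bound: "l1_norm G \<le> 2 * l1_norm A"
  proof -
    have "l1_norm G \<le> l1_norm A + t * l1_norm (C ** G)"
      using l1_norm_diff[of A "t *\<^sub>R (C ** G)"] t G_eq by (simp add: l1_norm_scaleR)
    also have "\<dots> \<le> l1_norm A + (t * l1_norm C) * l1_norm G"
      using t l1_norm_mult[of C G] by (simp add: mult.assoc mult_left_mono)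
    also have "\<dots> \<le> l1_norm A + (1/2) * l1_norm G"
      using mult_right_mono[OF t(2) l1_norm_nonneg[of G]] unfolding C_def by simp
    finally show ?thesis by simp
  qed
  have "G - (A - t *\<^sub>R (C ** A)) = t *\<^sub>R (C ** (A - G))"
    using G_eq by (simp add: matrix_diff_ldistrib scaleR_diff_right algebra_simps)
  also have "A - G = t *\<^sub>R (C ** G)"
    using G_eq by (simp add: algebra_simps)
  finally have error: "G - (A - t *\<^sub>R (C ** A)) = t\<^sup>2 *\<^sub>R (C ** (C ** G))"
    by (simp add: matrix_scalar_ac scalar_matrix_assoc[symmetric] power2_eq_square)
  have "l1_norm (C ** (C ** G)) \<le> l1_norm C * (l1_norm C * l1_norm G)"
    using l1_norm_mult[of C "C ** G"] l1_norm_mult[of C G] l1_norm_nonneg[of C]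
    by (meson mult_left_mono order_trans)
  also have "\<dots> \<le> l1_norm C * (l1_norm C * (2 * l1_norm A))"
    using G_bound l1_norm_nonneg[of C] by (intro mult_left_mono) auto
  finally have "l1_norm (G - (A - t *\<^sub>R (C ** A))) \<le> t\<^sup>2 * (l1_norm C * (l1_norm C * (2 * l1_norm A)))"
    unfolding error by (simp add: l1_norm_scaleR mult_left_mono)
  then show ?thesis
    unfolding G_def[symmetric] C_def[symmetric] by (simp add: mult_ac power2_eq_square)
qed

section \<open>Absolute row sums to first order\<close>

text \<open>Subtracting something smaller than \<open>|x|\<close> does not change the sign of \<open>x\<close>, so the absolute
  value changes linearly.\<close>

lemma abs_diff_small: "\<bar>y\<bar> \<le> \<bar>x\<bar> \<Longrightarrow> \<bar>x - y\<bar> = \<bar>x\<bar> - sgn x * (y::real)"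
  by (cases x "0::real" rule: linorder_cases) (auto simp: abs_le_iff)

lemma row_abs_sum_first_order:
  fixes G A B :: "real^'n^'m"
  assumes close: "\<And>j. \<bar>G $ i $ j - (A $ i $ j - t * B $ i $ j)\<bar> \<le> e"
    and small: "\<And>j. \<bar>t * B $ i $ j\<bar> \<le> \<bar>A $ i $ j\<bar>"
  shows "\<bar>(\<Sum>j\<in>UNIV. \<bar>G $ i $ j\<bar>)
           - ((\<Sum>j\<in>UNIV. \<bar>A $ i $ j\<bar>) - t * (\<Sum>j\<in>UNIV. sgn (A $ i $ j) * B $ i $ j))\<bar>
         \<le> real CARD('n) * e"
proof -
  have "(\<Sum>j\<in>UNIV. \<bar>A $ i $ j\<bar>) - t * (\<Sum>j\<in>UNIV. sgn (A $ i $ j) * B $ i $ j)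
          = (\<Sum>j\<in>UNIV. \<bar>A $ i $ j - t * B $ i $ j\<bar>)"
    using abs_diff_small[OF small]
    by (simp add: sum_subtractf sum_distrib_left mult.left_commute)
  moreover have "\<bar>(\<Sum>j\<in>UNIV. \<bar>G $ i $ j\<bar>) - (\<Sum>j\<in>UNIV. \<bar>A $ i $ j - t * B $ i $ j\<bar>)\<bar>
                   \<le> (\<Sum>j\<in>(UNIV::'n set). e)"
    unfolding sum_subtractf[symmetric]
    by (intro order.trans[OF sum_abs] sum_mono order.trans[OF abs_triangle_ineq3 close])
  ultimately show ?thesis by simp
qed

text \<open>The absolute row sums of \<open>(S + tP)\<^sup>-\<^sup>1\<close> for small \<open>t \<ge> 0\<close>, when the left inverse \<open>A\<close> of
  \<open>S\<close> has no zero entry: \<open>t\<close> is chosen so small that the expansion above applies and \<open>t A P A\<close>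
  stays below the smallest entry of \<open>|A|\<close>.\<close>

lemma perturbed_inverse_row_sums:
  fixes S P A :: "real^'n^'n"
  assumes left_inv: "A ** S = mat 1" and nonzero: "\<And>i j. A $ i $ j \<noteq> 0"
  obtains \<delta> K where "\<delta> > 0"
    and "\<And>i t. 0 \<le> t \<Longrightarrow> t \<le> \<delta> \<Longrightarrow>
          \<bar>(\<Sum>j\<in>UNIV. \<bar>matrix_inv (S + t *\<^sub>R P) $ i $ j\<bar>)
           - ((\<Sum>j\<in>UNIV. \<bar>A $ i $ j\<bar>) - t * (\<Sum>j\<in>UNIV. sgn (A $ i $ j) * (A ** P ** A) $ i $ j))\<bar>
         \<le> K * t\<^sup>2"
proof -
  define B where "B = A ** P ** A"
  define m where "m = Min (range (\<lambda>(i, j). \<bar>A $ i $ j\<bar>))"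
  have m_le: "m \<le> \<bar>A $ i $ j\<bar>" for i j
    unfolding m_def by (rule Min_le) auto
  have "m \<in> range (\<lambda>(i, j). \<bar>A $ i $ j\<bar>)"
    unfolding m_def by (rule Min_in) auto
  then have m_pos: "m > 0"
    using nonzero by auto
  define \<delta> where "\<delta> = min (1 / (2 * (l1_norm (A ** P) + 1))) (m / (l1_norm B + 1))"
  define K where "K = real CARD('n) * (2 * l1_norm (A ** P)^2 * l1_norm A)"
  have "\<delta> > 0"
    unfolding \<delta>_def using m_pos l1_norm_nonneg[of B] l1_norm_nonneg[of "A ** P"] by simp
  moreover have "\<bar>(\<Sum>j\<in>UNIV. \<bar>matrix_inv (S + t *\<^sub>R P) $ i $ j\<bar>)
           - ((\<Sum>j\<in>UNIV. \<bar>A $ i $ j\<bar>) - t * (\<Sum>j\<in>UNIV. sgn (A $ i $ j) * B $ i $ j))\<bar>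
         \<le> K * t\<^sup>2" if t: "0 \<le> t" "t \<le> \<delta>" for i t
  proof -
    have "t * l1_norm (A ** P) \<le> 1 / (2 * (l1_norm (A ** P) + 1)) * l1_norm (A ** P)"
      using t l1_norm_nonneg[of "A ** P"] by (intro mult_right_mono) (auto simp: \<delta>_def)
    also have "\<dots> \<le> 1/2"
      using l1_norm_nonneg[of "A ** P"] by (simp add: field_simps)
    finally have expansion:
      "l1_norm (matrix_inv (S + t *\<^sub>R P) - (A - t *\<^sub>R B)) \<le> 2 * l1_norm (A ** P)^2 * l1_norm A * t\<^sup>2"
      using perturbed_inverse_expansion[OF left_inv t(1)] unfolding B_def by blast
    have close: "\<bar>matrix_inv (S + t *\<^sub>R P) $ i $ j - (A $ i $ j - t * B $ i $ j)\<bar>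
                   \<le> 2 * l1_norm (A ** P)^2 * l1_norm A * t\<^sup>2" for j
      using order.trans[OF entry_le_l1_norm expansion, of i j] by simp
    have small: "\<bar>t * B $ i $ j\<bar> \<le> \<bar>A $ i $ j\<bar>" for j
    proof -
      have "t \<le> m / (l1_norm B + 1)"
        using t(2) by (simp add: \<delta>_def)
      then have "\<bar>t * B $ i $ j\<bar> \<le> m / (l1_norm B + 1) * l1_norm B"
        unfolding abs_mult using t(1) entry_le_l1_norm[of B i j] by (intro mult_mono) auto
      also have "\<dots> \<le> m"
        using m_pos l1_norm_nonneg[of B] by (simp add: field_simps)
      finally show ?thesis using m_le[of i j] by linarith
    qed
    show ?thesis
      using row_abs_sum_first_order[OF close small] unfolding K_def by (simp add: mult_ac)
  qed
  ultimately show ?thesis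
    using that unfolding B_def by blast
qed

section \<open>One-sided derivatives of maxima\<close>

text \<open>A quadratic error bound \<open>|f t - (c + t D)| \<le> K t\<^sup>2\<close> on \<open>[0, \<delta>]\<close> gives the right derivative
  \<open>D\<close> at \<open>0\<close>: the difference quotients are within \<open>K t\<close> of \<open>D\<close>.\<close>

lemma has_real_derivative_at_right_from_quadratic_bound:
  fixes f :: "real \<Rightarrow> real"
  assumes "\<delta> > 0" and bound: "\<And>t. 0 \<le> t \<Longrightarrow> t \<le> \<delta> \<Longrightarrow> \<bar>f t - (c + t * D)\<bar> \<le> K * t\<^sup>2"
  shows "(f has_real_derivative D) (at 0 within {0..})"
proof -
  have f0: "f 0 = c"
    using bound[of 0] \<open>\<delta> > 0\<close> by simp
  have "\<forall>\<^sub>F t in at 0 within {0..}. norm ((f t - f 0) / (t - 0) - D) \<le> K * t"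
    unfolding eventually_at
  proof (intro exI[of _ \<delta>] conjI ballI impI \<open>\<delta> > 0\<close>)
    fix t :: real
    assume "t \<in> {0..}" "t \<noteq> 0 \<and> dist t 0 < \<delta>"
    then have t: "0 < t" "t \<le> \<delta>" by auto
    have "(f t - f 0) / (t - 0) - D = (f t - (c + t * D)) / t"
      using t by (simp add: f0 field_simps)
    also have "\<bar>\<dots>\<bar> \<le> K * t\<^sup>2 / t"
      using bound[of t] t by (simp add: divide_right_mono)
    finally show "norm ((f t - f 0) / (t - 0) - D) \<le> K * t"
      using t by (simp add: power2_eq_square)
  qed
  moreover have "((\<lambda>t. K * t) \<longlongrightarrow> 0) (at 0 within {0..})"
    by (auto intro!: tendsto_eq_intros)
  ultimately have "((\<lambda>t. (f t - f 0) / (t - 0) - D) \<longlongrightarrow> 0) (at 0 within {0..})"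
    by (rule Lim_null_comparison)
  then show ?thesis
    unfolding has_field_derivative_iff LIM_zero_iff .
qed

lemma Max_first_order:
  fixes g :: "'i::finite \<Rightarrow> real \<Rightarrow> real"
  assumes "\<delta> > 0"
    and bound: "\<And>i t. 0 \<le> t \<Longrightarrow> t \<le> \<delta> \<Longrightarrow> \<bar>g i t - (c + t * d i)\<bar> \<le> K * t\<^sup>2"
  shows "((\<lambda>t. Max (range (\<lambda>i. g i t))) has_real_derivative Max (range d)) (at 0 within {0..})"
proof (rule has_real_derivative_at_right_from_quadratic_bound[OF \<open>\<delta> > 0\<close>])
  fix t :: real
  assume t: "0 \<le> t" "t \<le> \<delta>"
  have upper: "Max (range (\<lambda>i. g i t)) \<le> c + t * Max (range d) + K * t\<^sup>2"
  proof (rule Max.boundedI)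
    fix y
    assume "y \<in> range (\<lambda>i. g i t)"
    then obtain i where "y = g i t" by auto
    moreover have "t * d i \<le> t * Max (range d)"
      using t by (intro mult_left_mono Max_ge) auto
    ultimately show "y \<le> c + t * Max (range d) + K * t\<^sup>2"
      using bound[OF t, of i] by (simp add: abs_le_iff)
  qed auto
  have "Max (range d) \<in> range d"
    by (rule Max_in) auto
  then obtain i0 where i0: "Max (range d) = d i0"
    by blast
  have "g i0 t \<le> Max (range (\<lambda>i. g i t))"
    by (rule Max_ge) auto
  then have "c + t * Max (range d) - K * t\<^sup>2 \<le> Max (range (\<lambda>i. g i t))"
    using bound[OF t, of i0] unfolding i0 abs_le_iff by linarith
  with upper show "\<bar>Max (range (\<lambda>i. g i t)) - (c + t * Max (range d))\<bar> \<le> K * t\<^sup>2"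
    unfolding abs_le_iff by linarith
qed

section \<open>The matrices \<open>a I + c J\<close>\<close>

text \<open>\<open>uniform_matrix a c\<close> has every diagonal entry equal to \<open>a + c\<close> and every off-diagonal
  entry equal to \<open>c\<close>; both \<open>S\<close> and its inverse are of this form.\<close>

definition uniform_matrix :: "real \<Rightarrow> real \<Rightarrow> real^'n^'n" where
  "uniform_matrix a c = (\<chi> i j. (if i = j then a else 0) + c)"

lemma uniform_matrix_mult_left:
  "(uniform_matrix a c ** X) $ i $ j = a * X $ i $ j + c * (\<Sum>m\<in>UNIV. X $ m $ j)"
proof -
  have "(uniform_matrix a c ** X) $ i $ j
          = (\<Sum>m\<in>UNIV. (if i = m then a * X $ m $ j else 0) + c * X $ m $ j)"
    by (simp add: uniform_matrix_def matrix_matrix_mult_def) (intro sum.cong, auto simp: algebra_simps)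
  then show ?thesis
    by (simp add: sum.distrib sum_distrib_left)
qed

lemma uniform_matrix_mult_right:
  "(X ** uniform_matrix a c) $ i $ j = a * X $ i $ j + c * (\<Sum>k\<in>UNIV. X $ i $ k)"
proof -
  have "(X ** uniform_matrix a c) $ i $ j
          = (\<Sum>k\<in>UNIV. (if k = j then a * X $ i $ k else 0) + c * X $ i $ k)"
    by (simp add: uniform_matrix_def matrix_matrix_mult_def) (intro sum.cong, auto simp: algebra_simps)
  then show ?thesis
    by (simp add: sum.distrib sum_distrib_left)
qed

text \<open>The inverse of \<open>\<alpha> I + c J\<close> (Sherman--Morrison for a rank-one update of \<open>\<alpha> I\<close>).\<close>

lemma uniform_matrix_left_inverse:
  fixes \<alpha> c :: real
  defines "N \<equiv> real CARD('n)"
  assumes "\<alpha> \<noteq> 0" and "\<alpha> + N * c \<noteq> 0"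
  shows "uniform_matrix (1 / \<alpha>) (- c / (\<alpha> * (\<alpha> + N * c))) ** (uniform_matrix \<alpha> c :: real^'n^'n) = mat 1"
proof -
  have col: "(\<Sum>m\<in>UNIV. (uniform_matrix \<alpha> c :: real^'n^'n) $ m $ j) = \<alpha> + N * c" for j
    by (simp add: uniform_matrix_def sum.distrib N_def)
  show ?thesis
    using assms(2,3)
    by (simp add: vec_eq_iff uniform_matrix_mult_left col mat_def)
       (simp add: uniform_matrix_def field_simps)
qed

lemma uniform_inverse_coefficient_signs:
  fixes \<alpha> l N :: real
  assumes "\<alpha> > 0" and "l > 0" and "N \<ge> 1"
  shows "0 < 1 / \<alpha> + - l / (\<alpha> * (\<alpha> + N * l))" and "- l / (\<alpha> * (\<alpha> + N * l)) < 0"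
proof -
  have "l \<le> N * l"
    using assms by simp
  then have L: "l < \<alpha> + N * l" "0 < \<alpha> + N * l"
    using assms by linarith+
  then have "l / (\<alpha> * (\<alpha> + N * l)) < (\<alpha> + N * l) / (\<alpha> * (\<alpha> + N * l))"
    using assms by (intro divide_strict_right_mono) auto
  also have "\<dots> = 1 / \<alpha>"
    using L by simp
  finally show "0 < 1 / \<alpha> + - l / (\<alpha> * (\<alpha> + N * l))"
    by simp
  show "- l / (\<alpha> * (\<alpha> + N * l)) < 0"
    using assms L by simp
qed

lemma inverse_of_S:
  fixes \<alpha> l :: real
  defines "A \<equiv> (uniform_matrix (1 / \<alpha>) (- l / (\<alpha> * (\<alpha> + real CARD('n) * l))) :: real^'n^'n)"
  assumes "\<alpha> > 0" and "l > 0"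
  shows "A ** (\<alpha> *\<^sub>R mat 1 + (\<chi> i j. l)) = mat 1" and "A $ i $ j \<noteq> 0"
proof -
  have "1 \<le> real CARD('n)"
    by simp
  note signs = uniform_inverse_coefficient_signs[OF assms(2,3) this]
  have S_eq: "\<alpha> *\<^sub>R mat 1 + (\<chi> i j. l) = (uniform_matrix \<alpha> l :: real^'n^'n)"
    by (simp add: uniform_matrix_def mat_def vec_eq_iff)
  have "0 < real CARD('n) * l"
    using assms by simp
  then have "\<alpha> + real CARD('n) * l \<noteq> 0"
    using assms by linarith
  then show "A ** (\<alpha> *\<^sub>R mat 1 + (\<chi> i j. l)) = mat 1"
    using uniform_matrix_left_inverse[where 'n = 'n, of \<alpha> l] assms(2) unfolding A_def S_eq by simp
  show "A $ i $ j \<noteq> 0"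
    using signs by (auto simp: A_def uniform_matrix_def)
qed

lemma sum_diag_offdiag:
  "(\<Sum>j\<in>(UNIV::'n::finite set). if i = j then x else y) = x + (real CARD('n) - 1) * y"
proof -
  have "(\<Sum>j\<in>(UNIV::'n set). if i = j then x else y) = (\<Sum>j\<in>UNIV. y + (if i = j then x - y else 0))"
    by (intro sum.cong) auto
  then show ?thesis
    by (simp add: sum.distrib algebra_simps)
qed

lemma uniform_matrix_abs_row_sum:
  "(\<Sum>j\<in>UNIV. \<bar>(uniform_matrix a c :: real^'n^'n) $ i $ j\<bar>) = \<bar>a + c\<bar> + (real CARD('n) - 1) * \<bar>c\<bar>"
proof -
  have "(\<Sum>j\<in>UNIV. \<bar>(uniform_matrix a c :: real^'n^'n) $ i $ j\<bar>)
          = (\<Sum>j\<in>UNIV. if i = j then \<bar>a + c\<bar> else \<bar>c\<bar>)"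
    by (intro sum.cong) (auto simp: uniform_matrix_def)
  then show ?thesis
    by (simp add: sum_diag_offdiag)
qed

lemma uniform_matrix_sgn_row_sum:
  assumes "0 < a + c" and "c < 0"
  shows "(\<Sum>j\<in>UNIV. sgn ((uniform_matrix a c :: real^'n^'n) $ i $ j) * y $ j) = 2 * y $ i - sum (($) y) UNIV"
proof -
  have "(\<Sum>j\<in>UNIV. sgn ((uniform_matrix a c :: real^'n^'n) $ i $ j) * y $ j)
          = (\<Sum>j\<in>UNIV. 2 * (if i = j then y $ j else 0) - y $ j)"
    using assms by (intro sum.cong) (auto simp: uniform_matrix_def)
  then show ?thesis
    by (simp add: sum_subtractf sum_distrib_left[symmetric])
qed

section \<open>Positivity of the first-order coefficients\<close>

lemma uniform_sandwich_row:
  fixes P :: "real^'n^'n" and a c :: real and i :: 'n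
  assumes sym: "transpose P = P"
  defines "U \<equiv> (uniform_matrix a c :: real^'n^'n)"
    and "p \<equiv> (\<Sum>k\<in>UNIV. P $ i $ k)" and "s \<equiv> (\<Sum>k\<in>UNIV. \<Sum>m\<in>UNIV. P $ k $ m)"
  shows "2 * (U ** P ** U) $ i $ i - (\<Sum>j\<in>UNIV. (U ** P ** U) $ i $ j)
           = 2 * a * (a * P $ i $ i + c * p) + 2 * c * (a * p + c * s)
             - (a + real CARD('n) * c) * (a * p + c * s)"
proof -
  have col: "(\<Sum>m\<in>UNIV. P $ m $ j) = (\<Sum>m\<in>UNIV. P $ j $ m)" for j
    using sym by (metis (no_types, lifting) sum.cong transpose_def vec_lambda_beta)
  have UP: "(U ** P) $ i $ j = a * P $ i $ j + c * (\<Sum>m\<in>UNIV. P $ j $ m)" for j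
    unfolding U_def uniform_matrix_mult_left col ..
  have UP_row: "(\<Sum>j\<in>UNIV. (U ** P) $ i $ j) = a * p + c * s"
    unfolding UP by (simp add: sum.distrib sum_distrib_left p_def s_def)
  have B: "(U ** P ** U) $ i $ j = a * (U ** P) $ i $ j + c * (a * p + c * s)" for j
    unfolding U_def uniform_matrix_mult_right UP_row[unfolded U_def] ..
  have "(\<Sum>j\<in>UNIV. (U ** P ** U) $ i $ j) = (a + real CARD('n) * c) * (a * p + c * s)"
    unfolding B by (simp add: sum.distrib sum_distrib_left[symmetric] UP_row algebra_simps)
  then show ?thesis
    unfolding B UP p_def by (simp add: algebra_simps)
qed

lemma offdiag_row_sum_le_diag:
  fixes P :: "real^'n^'n"
  assumes "diag_dominant P" and "\<forall>i j. P $ i $ j \<ge> 0"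
  shows "(\<Sum>k\<in>UNIV - {i}. P $ i $ k) \<le> P $ i $ i"
  using assms unfolding diag_dominant_def Delta_def by auto

lemma total_sum_ge_cross:
  fixes P :: "real^'n^'n"
  assumes sym: "transpose P = P" and nonneg: "\<forall>i j. P $ i $ j \<ge> 0"
  shows "P $ i $ i + 2 * (\<Sum>k\<in>UNIV - {i}. P $ i $ k) \<le> (\<Sum>k\<in>UNIV. \<Sum>m\<in>UNIV. P $ k $ m)"
proof -
  have "(\<Sum>k\<in>UNIV. \<Sum>m\<in>UNIV. P $ k $ m)
          = (\<Sum>m\<in>UNIV. P $ i $ m) + (\<Sum>k\<in>UNIV - {i}. \<Sum>m\<in>UNIV. P $ k $ m)"
    by (rule sum.remove) auto
  moreover have "(\<Sum>m\<in>UNIV. P $ i $ m) = P $ i $ i + (\<Sum>k\<in>UNIV - {i}. P $ i $ k)"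
    by (rule sum.remove) auto
  moreover have "(\<Sum>k\<in>UNIV - {i}. P $ i $ k) \<le> (\<Sum>k\<in>UNIV - {i}. \<Sum>m\<in>UNIV. P $ k $ m)"
  proof (rule sum_mono)
    fix k
    have "P $ i $ k = P $ k $ i"
      using sym by (metis transpose_def vec_lambda_beta)
    also have "\<dots> \<le> (\<Sum>m\<in>UNIV. P $ k $ m)"
      using nonneg by (intro member_le_sum) auto
    finally show "P $ i $ k \<le> (\<Sum>m\<in>UNIV. P $ k $ m)" .
  qed
  ultimately show ?thesis by linarith
qed

lemma total_sum_pos:
  fixes P :: "real^'n^'m"
  assumes "P \<noteq> 0" and nonneg: "\<forall>i j. P $ i $ j \<ge> 0"
  shows "0 < (\<Sum>k\<in>UNIV. \<Sum>m\<in>UNIV. P $ k $ m)"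
proof -
  obtain i j where "P $ i $ j \<noteq> 0"
    using assms(1) by (metis vec_eq_iff zero_index)
  then have "0 < P $ i $ j"
    using nonneg by (metis order_le_less)
  also have "\<dots> \<le> (\<Sum>m\<in>UNIV. P $ i $ m)"
    using nonneg by (intro member_le_sum) auto
  also have "\<dots> \<le> (\<Sum>k\<in>UNIV. \<Sum>m\<in>UNIV. P $ k $ m)"
    using nonneg by (intro member_le_sum sum_nonneg) auto
  finally show ?thesis .
qed

text \<open>The scalar inequality behind the positivity: with \<open>d = P\<^sub>i\<^sub>i\<close>, \<open>r\<close> the off-diagonal row sum and
  \<open>s\<close> the total sum, the numerator splits into the nonnegative terms \<open>(d - r) u\<close>, \<open>r v\<close> and
  \<open>l (2 l + \<alpha>) (s - d - 2 r)\<close>, where \<open>u, v > 0\<close> because \<open>N \<ge> 3\<close>.\<close>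

lemma numerator_pos:
  fixes \<alpha> l N d r s :: real
  defines "L \<equiv> \<alpha> + N * l"
  assumes "\<alpha> > 0" "l > 0" "N \<ge> 3" "0 \<le> r" "r \<le> d" "d + 2 * r \<le> s" "0 < s"
  shows "0 < 2 * L\<^sup>2 * d - (4 * l + \<alpha>) * L * (d + r) + l * (2 * l + \<alpha>) * s"
proof -
  define u where "u = \<alpha>\<^sup>2 + (3 * N - 3) * \<alpha> * l + 2 * (N - 1)\<^sup>2 * l\<^sup>2"
  define v where "v = (2 * N - 5) * \<alpha> * l + 2 * (N - 1) * (N - 3) * l\<^sup>2"
  have split: "2 * L\<^sup>2 * d - (4 * l + \<alpha>) * L * (d + r) + l * (2 * l + \<alpha>) * s
                 = (d - r) * u + r * v + l * (2 * l + \<alpha>) * (s - d - 2 * r)"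
    unfolding u_def v_def L_def by (simp add: algebra_simps power2_eq_square)
  have "u > 0"
    unfolding u_def using assms by (intro add_pos_nonneg) auto
  have "v > 0"
    unfolding v_def using assms by (intro add_pos_nonneg) auto
  have rest: "0 \<le> l * (2 * l + \<alpha>) * (s - d - 2 * r)"
    using assms by auto
  show ?thesis
  proof (cases "r < d")
    case True
    then have "0 < (d - r) * u" and "0 \<le> r * v"
      using \<open>u > 0\<close> \<open>v > 0\<close> \<open>0 \<le> r\<close> by simp_all
    then show ?thesis
      unfolding split using rest by linarith
  next
    case False
    then have "r = d"
      using \<open>r \<le> d\<close> by linarith
    show ?thesis
    proof (cases "d = 0")
      case True
      then show ?thesis
        unfolding split using \<open>r = d\<close> assms by simp
    next
      case False
      then have "0 < r * v"
        using \<open>r = d\<close> \<open>0 \<le> r\<close> \<open>v > 0\<close> by simp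
      then show ?thesis
        unfolding split using \<open>r = d\<close> rest by simp
    qed
  qed
qed

text \<open>It equals the numerator above divided by \<open>(\<alpha> (\<alpha> + N l))\<^sup>2\<close>.\<close>

lemma sandwich_first_order_pos:
  fixes P :: "real^'n^'n" and \<alpha> l :: real
  defines "N \<equiv> real CARD('n)"
  defines "A \<equiv> (uniform_matrix (1 / \<alpha>) (- l / (\<alpha> * (\<alpha> + N * l))) :: real^'n^'n)"
  assumes "N \<ge> 3" and "\<alpha> > 0" and "l > 0" and "P \<noteq> 0" and sym: "transpose P = P"
    and dd: "diag_dominant P" and nonneg: "\<forall>i j. P $ i $ j \<ge> 0"
  shows "0 < (\<Sum>j\<in>UNIV. sgn (A $ i $ j) * (A ** P ** A) $ i $ j)"
proof -
  define L where "L = \<alpha> + N * l"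
  define a where "a = 1 / \<alpha>"
  define c where "c = - l / (\<alpha> * L)"
  define d where "d = P $ i $ i"
  define r where "r = (\<Sum>k\<in>UNIV - {i}. P $ i $ k)"
  define s where "s = (\<Sum>k\<in>UNIV. \<Sum>m\<in>UNIV. P $ k $ m)"
  have A_eq: "A = uniform_matrix a c"
    unfolding A_def a_def c_def L_def ..
  have "3 * l \<le> N * l"
    using assms by (intro mult_right_mono) auto
  then have L: "L > \<alpha>" "\<alpha> > 0"
    using assms unfolding L_def by linarith+
  have row: "(\<Sum>k\<in>UNIV. P $ i $ k) = d + r"
    unfolding d_def r_def by (rule sum.remove) auto
  have "a + N * c = (L - N * l) / (\<alpha> * L)"
    using L by (simp add: a_def c_def field_simps)
  also have "\<dots> = 1 / L"
    using L by (simp add: L_def)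
  finally have aNc: "a + N * c = 1 / L" .
  have "0 < a + c" and "c < 0"
    using uniform_inverse_coefficient_signs[OF \<open>\<alpha> > 0\<close> \<open>l > 0\<close>, of N] \<open>N \<ge> 3\<close>
    unfolding a_def c_def L_def by simp_all
  then have "(\<Sum>j\<in>UNIV. sgn (A $ i $ j) * (A ** P ** A) $ i $ j)
               = 2 * (A ** P ** A) $ i $ i - (\<Sum>j\<in>UNIV. (A ** P ** A) $ i $ j)"
    unfolding A_eq by (rule uniform_matrix_sgn_row_sum)
  also have "\<dots> = 2 * a * (a * d + c * (d + r)) + 2 * c * (a * (d + r) + c * s)
                     - (a + N * c) * (a * (d + r) + c * s)"
    unfolding A_eq uniform_sandwich_row[OF sym] row N_def[symmetric] d_def s_def ..
  also have "\<dots> = (2 * L\<^sup>2 * d - (4 * l + \<alpha>) * L * (d + r) + l * (2 * l + \<alpha>) * s) / (\<alpha> * L)\<^sup>2"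
    unfolding aNc using L by (simp add: a_def c_def field_simps power2_eq_square)
  also have "\<dots> > 0"
  proof -
    have "0 < 2 * L\<^sup>2 * d - (4 * l + \<alpha>) * L * (d + r) + l * (2 * l + \<alpha>) * s"
      unfolding L_def d_def r_def s_def
      using assms offdiag_row_sum_le_diag[OF dd nonneg, of i] total_sum_ge_cross[OF sym nonneg, of i]
        total_sum_pos[OF \<open>P \<noteq> 0\<close> nonneg]
      by (intro numerator_pos) (auto intro: sum_nonneg)
    then show ?thesis
      using L by simp
  qed
  finally show ?thesis .
qed

text \<open>The hypothesis \<open>\<alpha> \<ge> (N - 2) l\<close> enters
  only through \<open>\<alpha> > 0\<close>.\<close>

theorem proposition5p1:
  fixes P :: "real^'n^'n" and l \<alpha> :: real
  assumes "CARD('n) \<ge> 3"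
    and "l > 0"
    and "\<alpha> \<ge> (real CARD('n) - 2) * l"
    and "P \<noteq> 0"
    and "transpose P = P"
    and "diag_dominant P"
    and "\<forall>i j. P $ i $ j \<ge> 0"
  shows "let S = (\<alpha> *\<^sub>R mat 1 + (\<chi> i j. l) :: real^'n^'n);
             f = (\<lambda>t::real. norm_inf (matrix_inv (S + t *\<^sub>R P)))
         in \<exists>D. (f has_real_derivative D) (at 0 within {0..}) \<and> D < 0"
proof -
  define N where "N = real CARD('n)"
  define S :: "real^'n^'n" where "S = \<alpha> *\<^sub>R mat 1 + (\<chi> i j. l)"
  define A :: "real^'n^'n" where "A = uniform_matrix (1 / \<alpha>) (- l / (\<alpha> * (\<alpha> + N * l)))"
  define r where "r i = (\<Sum>j\<in>UNIV. sgn (A $ i $ j) * (A ** P ** A) $ i $ j)" for i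
  have N: "N \<ge> 3"
    using assms(1) by (simp add: N_def)
  then have "\<alpha> > 0"
    using assms(2,3) mult_right_mono[of 1 "N - 2" l] unfolding N_def by linarith
  then have "A ** S = mat 1" and "\<And>i j. A $ i $ j \<noteq> 0"
    using inverse_of_S[OF _ assms(2)] unfolding A_def S_def N_def by blast+
  then obtain \<delta> K where "\<delta> > 0" and rows: "\<And>i t. 0 \<le> t \<Longrightarrow> t \<le> \<delta> \<Longrightarrow>
      \<bar>(\<Sum>j\<in>UNIV. \<bar>matrix_inv (S + t *\<^sub>R P) $ i $ j\<bar>) - ((\<Sum>j\<in>UNIV. \<bar>A $ i $ j\<bar>) - t * r i)\<bar> \<le> K * t\<^sup>2"
    unfolding r_def by (rule perturbed_inverse_row_sums[where P = P]) blast
  then have "((\<lambda>t. norm_inf (matrix_inv (S + t *\<^sub>R P))) has_real_derivative Max (range (\<lambda>i. - r i)))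
               (at 0 within {0..})"
    unfolding norm_inf_def A_def uniform_matrix_abs_row_sum
    by (intro Max_first_order[OF \<open>\<delta> > 0\<close>]) auto
  moreover have "Max (range (\<lambda>i. - r i)) < 0"
    using sandwich_first_order_pos[OF _ \<open>\<alpha> > 0\<close> assms(2,4-7)] N
    unfolding r_def A_def N_def by (subst Max_less_iff) auto
  ultimately show ?thesis
    unfolding Let_def S_def by blast
qed

end
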